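(* Let $G$ be an interval filament graph with a filament representation $\varphi$. Suppose a cop occupies the vertex $u$ and the robber occupies a vertex whose filament is contained in the bottom region of $\varphi(u)$. Then, as long as a cop stays on $u$, the robber stays on vertices whose filaments are contained in the bottom region of $\varphi(u)$ (any move leaving it results in his immediate capture).
   Context: An interval filament on $[a,b]$ ($a<b$) is the graph of a continuous $f\colon[a,b]\to\mathbb{R}$ with $f(a)=f(b)=0$ and $f>0$ on $(a,b)$. An interval filament graph has a representation $\varphi$ assigning filaments to vertices so that distinct vertices are adjacent iff their filaments intersect. Each filament splits the upper half-plane into the unbounded top region and the bounded bottom region (the region between the filament and the $x$-axis). Game of cops and robber: alternate moves, each piece stays or moves to an adjacent vertex; capture when a cop occupies the robber's vertex (a robber moving to a neighbor of a cop's vertex is captured in the next cop move). *)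

theory Defs
  imports "HOL-Analysis.Analysis"
begin

definition filament :: "('v \<Rightarrow> real) \<Rightarrow> ('v \<Rightarrow> real) \<Rightarrow> ('v \<Rightarrow> real \<Rightarrow> real) \<Rightarrow> 'v \<Rightarrow> (real \<times> real) set"
  where "filament lft rgt f v = {(x, f v x) | x. lft v \<le> x \<and> x \<le> rgt v}"

definition is_interval_filament :: "real \<Rightarrow> real \<Rightarrow> (real \<Rightarrow> real) \<Rightarrow> bool"
  where "is_interval_filament a b g \<longleftrightarrow>
     a < b \<and> continuous_on {a..b} g \<and> g a = 0 \<and> g b = 0 \<and> (\<forall>x\<in>{a<..<b}. g x > 0)"

definition filament_representation ::
  "'v set \<Rightarrow> ('v \<Rightarrow> 'v \<Rightarrow> bool) \<Rightarrow> ('v \<Rightarrow> real) \<Rightarrow> ('v \<Rightarrow> real) \<Rightarrow> ('v \<Rightarrow> real \<Rightarrow> real) \<Rightarrow> bool"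
  where "filament_representation V E lft rgt f \<longleftrightarrow>
     (\<forall>u v. E u v \<longrightarrow> u \<in> V \<and> v \<in> V \<and> u \<noteq> v) \<and>
     (\<forall>v\<in>V. is_interval_filament (lft v) (rgt v) (f v)) \<and>
     (\<forall>u\<in>V. \<forall>v\<in>V. u \<noteq> v \<longrightarrow> (E u v \<longleftrightarrow> filament lft rgt f u \<inter> filament lft rgt f v \<noteq> {}))"

text \<open>Bottom region of the filament of u: the part of the closed upper half-plane
  {y \<ge> 0} lying below the filament, i.e. the bounded component of the closed upper
  half-plane minus the filament.\<close>
definition bottom_region :: "('v \<Rightarrow> real) \<Rightarrow> ('v \<Rightarrow> real) \<Rightarrow> ('v \<Rightarrow> real \<Rightarrow> real) \<Rightarrow> 'v \<Rightarrow> (real \<times> real) set"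
  where "bottom_region lft rgt f u = {(x, y). lft u < x \<and> x < rgt u \<and> 0 \<le> y \<and> y < f u x}"

definition robber_move :: "('v \<Rightarrow> 'v \<Rightarrow> bool) \<Rightarrow> 'v \<Rightarrow> 'v \<Rightarrow> bool"
  where "robber_move E v w \<longleftrightarrow> w = v \<or> E v w"

end

theory Submission
  imports Defs
begin

text \<open>If the robber's filament lies below \<open>\<phi>(u)\<close> and he moves to a vertex \<open>w\<close>
  not adjacent to \<open>u\<close>, then \<open>\<phi>(w)\<close> meets the filament he left, hence has a point
  strictly below \<open>\<phi>(u)\<close>, but it does not meet \<open>\<phi>(u)\<close> itself.  By the intermediate
  value theorem \<open>\<phi>(w)\<close> stays strictly below \<open>\<phi>(u)\<close> on their common domain, and since
  \<open>\<phi>(u)\<close> vanishes at its endpoints while \<open>\<phi>(w)\<close> is nonnegative, the domain of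
  \<open>\<phi>(w)\<close> cannot reach them.  So \<open>\<phi>(w)\<close> lies in the bottom region again.\<close>

lemma continuous_on_connected_pos:
  fixes \<phi> :: "'a::topological_space \<Rightarrow> real"
  assumes "continuous_on S \<phi>" "connected S" "\<forall>y\<in>S. \<phi> y \<noteq> 0"
    and "t \<in> S" "\<phi> t > 0" "x \<in> S"
  shows "\<phi> x > 0"
proof (rule ccontr)
  assume "\<not> \<phi> x > 0"
  then have "0 \<in> \<phi> ` S"
    using connectedD_interval[OF connected_continuous_image[OF assms(1,2)], of "\<phi> x" "\<phi> t" 0]
      assms(4-6) by auto
  then show False
    using assms(3) by auto
qed

lemma is_interval_filament_nonneg:
  assumes "is_interval_filament a b g" "a \<le> x" "x \<le> b"
  shows "0 \<le> g x"
  using assms unfolding is_interval_filament_def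
  by (metis greaterThanLessThan_iff less_eq_real_def order_refl)

lemma is_interval_filament_below:
  assumes g: "is_interval_filament a b g" and h: "is_interval_filament c d h"
    and disjoint: "\<forall>x\<in>{a..b} \<inter> {c..d}. h x \<noteq> g x"
    and t: "t \<in> {a<..<b} \<inter> {c..d}" "h t < g t"
    and x: "x \<in> {c..d}"
  shows "a < x \<and> x < b \<and> 0 \<le> h x \<and> h x < g x"
proof -
  have common: "{a..b} \<inter> {c..d} = {max a c..min b d}"
    by auto
  have cont: "continuous_on ({a..b} \<inter> {c..d}) (\<lambda>y. g y - h y)"
    using g h unfolding is_interval_filament_def
    by (intro continuous_intros; auto elim: continuous_on_subset)
  have conn: "connected ({a..b} \<inter> {c..d})"
    unfolding common by simp
  have below: "h y < g y" if "y \<in> {a..b} \<inter> {c..d}" for y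
  proof -
    have "0 < g y - h y"
      by (rule continuous_on_connected_pos[OF cont conn, of t]) (use disjoint t that in auto)
    then show ?thesis by simp
  qed
  have "g a = 0" "g b = 0"
    using g unfolding is_interval_filament_def by auto
  \<comment> \<open>at an endpoint of \<open>[a,b]\<close> lying in \<open>[c,d]\<close> we would get \<open>0 \<le> h < g = 0\<close>\<close>
  then have "a < c" "d < b"
    using below[of a] below[of b] is_interval_filament_nonneg[OF h, of a]
      is_interval_filament_nonneg[OF h, of b] t by force+
  then show ?thesis
    using below[of x] x is_interval_filament_nonneg[OF h, of x] by auto
qed

lemma filament_subset_bottom_region:
  assumes u: "is_interval_filament (lft u) (rgt u) (f u)"
    and w: "is_interval_filament (lft w) (rgt w) (f w)"
    and disjoint: "filament lft rgt f u \<inter> filament lft rgt f w = {}"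
    and meets: "filament lft rgt f w \<inter> bottom_region lft rgt f u \<noteq> {}"
  shows "filament lft rgt f w \<subseteq> bottom_region lft rgt f u"
proof -
  obtain t where t: "t \<in> {lft w..rgt w}" "(t, f w t) \<in> bottom_region lft rgt f u"
    using meets unfolding filament_def by auto
  have "\<forall>x\<in>{lft u..rgt u} \<inter> {lft w..rgt w}. f w x \<noteq> f u x"
    using disjoint unfolding filament_def by fastforce
  with t have "lft u < x \<and> x < rgt u \<and> 0 \<le> f w x \<and> f w x < f u x" if "x \<in> {lft w..rgt w}" for x
    using is_interval_filament_below[OF u w, of t x] that unfolding bottom_region_def by auto
  then show ?thesis
    unfolding filament_def bottom_region_def by auto
qed

lemma filament_representation_move_below:
  assumes rep: "filament_representation V E lft rgt f" and u: "u \<in> V"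
    and v: "v \<in> V" "filament lft rgt f v \<subseteq> bottom_region lft rgt f u"
    and move: "robber_move E v w" and safe: "w \<noteq> u" "\<not> E u w"
  shows "w \<in> V \<and> filament lft rgt f w \<subseteq> bottom_region lft rgt f u"
  using move unfolding robber_move_def
proof
  assume "E v w"
  then have w: "w \<in> V" "filament lft rgt f v \<inter> filament lft rgt f w \<noteq> {}"
    using rep unfolding filament_representation_def by (metis v(1))+
  have "filament lft rgt f u \<inter> filament lft rgt f w = {}"
    using rep u w(1) safe unfolding filament_representation_def by metis
  moreover have "filament lft rgt f w \<inter> bottom_region lft rgt f u \<noteq> {}"
    using w(2) v(2) by blast
  ultimately show ?thesis
    using filament_subset_bottom_region rep u w(1) unfolding filament_representation_def by metis
qed (use v in simp)

theorem lemma1: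
  fixes V :: "'v set" and E :: "'v \<Rightarrow> 'v \<Rightarrow> bool"
    and lft rgt :: "'v \<Rightarrow> real" and f :: "'v \<Rightarrow> real \<Rightarrow> real"
    and u :: 'v and rob :: "nat \<Rightarrow> 'v" and n :: nat
  assumes rep: "filament_representation V E lft rgt f"
    and u: "u \<in> V"
    and start: "rob 0 \<in> V" "filament lft rgt f (rob 0) \<subseteq> bottom_region lft rgt f u"
    and moves: "\<forall>i<n. robber_move E (rob i) (rob (Suc i))"
    and not_captured: "\<forall>i\<le>n. rob i \<noteq> u \<and> \<not> E u (rob i)"
  shows "\<forall>i\<le>n. filament lft rgt f (rob i) \<subseteq> bottom_region lft rgt f u"
proof -
  have "rob i \<in> V \<and> filament lft rgt f (rob i) \<subseteq> bottom_region lft rgt f u" if "i \<le> n" for i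
    using that
  proof (induction i)
    case 0
    then show ?case using start by simp
  next
    case (Suc i)
    then have "rob i \<in> V" "filament lft rgt f (rob i) \<subseteq> bottom_region lft rgt f u"
      by simp_all
    then show ?case
      using filament_representation_move_below[OF rep u] moves not_captured Suc.prems
      by (meson Suc_le_lessD)
  qed
  then show ?thesis by blast
qed

end
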